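(* Let $\mu>0$. For every $n\in\mathbb{N}$ with $n>1$ and every $f\in C([0,1])$, $$\|\mathscr{L}_n^K f-f\|_\infty\le \omega\!\left(f_\mu,\tfrac{1}{\sqrt{n+1}}\right)\ln(2+\mu)\left\{1+\frac{1}{2\sqrt{n+1}}+\sqrt2\right\}+\omega(f_\mu,\gamma_n)\ln(2+\mu),$$ where $\gamma_n:=\max_{x\in[0,1]}|a_{n+1}(x)-x|$.
   Context: Fix $\mu>0$. Let $\ln_\mu(x):=\ln(1+\mu+x)$ for $x\in[0,1]$, and for $f:[0,1]\to\mathbb{R}$ let $f_\mu(x):=f(x)/\ln_\mu(x)$. Let $p_{n,k}(y):=\binom{n}{k}y^k(1-y)^{n-k}$ and $a_{n+1}(x):=\dfrac{\ln\left(1+\frac{x}{(n+1)(1+\mu)}\right)}{\ln\left(1+\frac{1}{(n+1)(1+\mu)}\right)}$, $x\in[0,1]$. For $n\in\mathbb{N}$ define $\mathscr{L}_n^K f(x):=\ln_\mu(x)\sum_{k=0}^n p_{n,k}(a_{n+1}(x))\,(n+1)\int_{k/(n+1)}^{(k+1)/(n+1)} f_\mu(t)\,dt$, $x\in[0,1]$. For $g\in C([0,1])$ and $\delta>0$, $\omega(g,\delta):=\sup\{|g(t)-g(x)|: x,t\in[0,1],\ |t-x|\le\delta\}$; $\|\cdot\|_\infty$ is the sup norm on $[0,1]$. *)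

theory Defs
  imports "HOL-Analysis.Analysis"
begin

definition ln_mu :: "real \<Rightarrow> real \<Rightarrow> real" where
  "ln_mu \<mu> x = ln (1 + \<mu> + x)"

definition f_mu :: "real \<Rightarrow> (real \<Rightarrow> real) \<Rightarrow> real \<Rightarrow> real" where
  "f_mu \<mu> f x = f x / ln_mu \<mu> x"

definition bern :: "nat \<Rightarrow> nat \<Rightarrow> real \<Rightarrow> real" where
  "bern n k y = real (n choose k) * y ^ k * (1 - y) ^ (n - k)"

(* a_{n+1}(x); the argument m plays the role of n+1 *)
definition a_seq :: "real \<Rightarrow> nat \<Rightarrow> real \<Rightarrow> real" where
  "a_seq \<mu> m x = ln (1 + x / (real m * (1 + \<mu>))) / ln (1 + 1 / (real m * (1 + \<mu>)))"

definition LK :: "real \<Rightarrow> nat \<Rightarrow> (real \<Rightarrow> real) \<Rightarrow> real \<Rightarrow> real" where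
  "LK \<mu> n f x = ln_mu \<mu> x * (\<Sum>k=0..n. bern n k (a_seq \<mu> (n+1) x) *
      (real (n+1) * integral {real k / real (n+1) .. real (k+1) / real (n+1)} (f_mu \<mu> f)))"

definition modc :: "(real \<Rightarrow> real) \<Rightarrow> real \<Rightarrow> real" where
  "modc g \<delta> = Sup {\<bar>g t - g x\<bar> | x t. x \<in> {0..1} \<and> t \<in> {0..1} \<and> \<bar>t - x\<bar> \<le> \<delta>}"

definition supn :: "(real \<Rightarrow> real) \<Rightarrow> real" where
  "supn g = Sup ((\<lambda>x. \<bar>g x\<bar>) ` {0..1})"

definition gamma_n :: "real \<Rightarrow> nat \<Rightarrow> real" where
  "gamma_n \<mu> n = Sup ((\<lambda>x. \<bar>a_seq \<mu> (n+1) x - x\<bar>) ` {0..1})"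

end

theory Submission
  imports Defs
begin

text \<open>
  With \<open>g = f\<^sub>\<mu>\<close> and \<open>y = a\<^sub>n\<^sub>+\<^sub>1(x) \<in> [0,1]\<close>, the operator is
  \<open>\<L>\<^sub>n\<^sup>K f(x) = ln\<^sub>\<mu>(x) \<cdot> K\<^sub>n g(y)\<close> with \<open>K\<^sub>n\<close> the classical Kantorovich operator, so
  \<open>\<L>\<^sub>n\<^sup>K f(x) - f(x) = ln\<^sub>\<mu>(x) ((K\<^sub>n g(y) - g(y)) + (g(y) - g(x)))\<close>.
  Since \<open>0 < ln\<^sub>\<mu> \<le> ln(2+\<mu>)\<close> on \<open>[0,1]\<close> and \<open>|y - x| \<le> \<gamma>\<^sub>n\<close>, the second term costs
  \<open>\<omega>(g,\<gamma>\<^sub>n) ln(2+\<mu>)\<close>.  For the first, subadditivity of the modulus gives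
  \<open>|g t - g y| \<le> (1 + |t-y|/\<delta>) \<omega>(g,\<delta>) \<le> (3/2 + (t-y)\<^sup>2/(2\<delta>\<^sup>2)) \<omega>(g,\<delta>)\<close>; averaging over
  the cells \<open>[k/(n+1), (k+1)/(n+1)]\<close> with Bernstein weights and using the second
  central moment of the Bernstein basis yields \<open>|K\<^sub>n g(y) - g(y)| \<le> 7/4 (1 + 1/(n+1)) \<omega>(g, 1/\<surd>(n+1))\<close>,
  which for \<open>n \<ge> 2\<close> is below the stated constant.
\<close>

lemma abs_diff_le_modc:
  assumes g: "continuous_on {0..1} g" and x: "x \<in> {0..1}" and t: "t \<in> {0..1}"
    and "\<bar>t - x\<bar> \<le> \<delta>"
  shows "\<bar>g t - g x\<bar> \<le> modc g \<delta>"
proof -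
  have "bounded (g ` {0..1})"
    by (intro compact_imp_bounded compact_continuous_image g compact_Icc)
  then obtain B where B: "\<And>z. z \<in> {0..1} \<Longrightarrow> \<bar>g z\<bar> \<le> B"
    unfolding bounded_iff by (metis image_eqI real_norm_def)
  have "bdd_above {\<bar>g t - g x\<bar> | x t. x \<in> {0..1} \<and> t \<in> {0..1} \<and> \<bar>t - x\<bar> \<le> \<delta>}"
    by (rule bdd_aboveI[where M = "2 * B"]) (clarify, smt (verit) B)
  then show ?thesis
    unfolding modc_def by (rule cSup_upper[rotated]) (use assms in blast)
qed

lemma modc_nonneg:
  assumes "continuous_on {0..1} g" and "\<delta> \<ge> 0"
  shows "modc g \<delta> \<ge> 0"
  using abs_diff_le_modc[OF assms(1), of 0 0 \<delta>] assms(2) by simp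

lemma abs_diff_le_of_nat_mult_modc:
  assumes g: "continuous_on {0..1} g" and x: "x \<in> {0..1}" and t: "t \<in> {0..1}"
    and d: "\<bar>t - x\<bar> \<le> real m * \<delta>"
  shows "\<bar>g t - g x\<bar> \<le> real m * modc g \<delta>"
proof (cases "m = 0")
  case True
  then show ?thesis using d by simp
next
  case False
  then have m: "real m > 0" by simp
  define z where "z i = x + real i / real m * (t - x)" for i :: nat
  have z_mem: "z i \<in> {0..1}" if "i \<le> m" for i
  proof -
    define u where "u = real i / real m"
    have u: "0 \<le> u" "u \<le> 1" using that m by (auto simp: u_def)
    have "z i = (1 - u) * x + u * t" using m by (simp add: z_def u_def field_simps)
    moreover have "0 \<le> (1 - u) * x + u * t" using u x t by simp
    moreover have "(1 - u) * x + u * t \<le> 1" using u x t by (intro convex_bound_le) auto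
    ultimately show ?thesis by simp
  qed
  have z_step: "\<bar>z (Suc i) - z i\<bar> \<le> \<delta>" for i
  proof -
    have "z (Suc i) - z i = (t - x) / real m" using m by (simp add: z_def field_simps)
    then show ?thesis using d m by (simp add: abs_divide divide_le_eq mult.commute)
  qed
  have "g t - g x = (\<Sum>i<m. g (z (Suc i)) - g (z i))"
    using m by (subst sum_lessThan_telescope) (simp add: z_def)
  then have "\<bar>g t - g x\<bar> \<le> (\<Sum>i<m. \<bar>g (z (Suc i)) - g (z i)\<bar>)"
    by (metis sum_abs)
  also have "\<dots> \<le> (\<Sum>i<m. modc g \<delta>)"
    by (intro sum_mono abs_diff_le_modc[OF g] z_mem z_step) auto
  finally show ?thesis by simp
qed

lemma abs_diff_le_modc_linear:
  assumes g: "continuous_on {0..1} g" and x: "x \<in> {0..1}" and t: "t \<in> {0..1}"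
    and "\<delta> > 0"
  shows "\<bar>g t - g x\<bar> \<le> (1 + \<bar>t - x\<bar> / \<delta>) * modc g \<delta>"
proof -
  define m where "m = nat \<lceil>\<bar>t - x\<bar> / \<delta>\<rceil>"
  have "\<bar>t - x\<bar> / \<delta> \<le> real m" and m_le: "real m \<le> 1 + \<bar>t - x\<bar> / \<delta>"
    unfolding m_def using \<open>\<delta> > 0\<close> by auto linarith
  then have "\<bar>t - x\<bar> \<le> real m * \<delta>"
    using \<open>\<delta> > 0\<close> by (simp add: divide_le_eq)
  then have "\<bar>g t - g x\<bar> \<le> real m * modc g \<delta>"
    by (rule abs_diff_le_of_nat_mult_modc[OF g x t])
  also have "\<dots> \<le> (1 + \<bar>t - x\<bar> / \<delta>) * modc g \<delta>"
    using m_le modc_nonneg[OF g] \<open>\<delta> > 0\<close> by (intro mult_right_mono) auto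
  finally show ?thesis .
qed

lemma abs_diff_le_modc_quadratic:
  assumes g: "continuous_on {0..1} g" and x: "x \<in> {0..1}" and t: "t \<in> {0..1}"
    and "\<delta> > 0"
  shows "\<bar>g t - g x\<bar> \<le> (3/2 + (t - x)\<^sup>2 / (2 * \<delta>\<^sup>2)) * modc g \<delta>"
proof -
  define l where "l = \<bar>t - x\<bar> / \<delta>"
  have "1 + l \<le> 3/2 + l\<^sup>2 / 2"
    using sum_squares_ge_zero[of "l - 1" 0] by (simp add: power2_eq_square algebra_simps)
  also have "l\<^sup>2 / 2 = (t - x)\<^sup>2 / (2 * \<delta>\<^sup>2)"
    by (simp add: l_def power_divide)
  finally have "(1 + l) * modc g \<delta> \<le> (3/2 + (t - x)\<^sup>2 / (2 * \<delta>\<^sup>2)) * modc g \<delta>"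
    using modc_nonneg[OF g] \<open>\<delta> > 0\<close> by (intro mult_right_mono) auto
  with abs_diff_le_modc_linear[OF assms] show ?thesis
    by (simp add: l_def)
qed

definition kantorovich :: "nat \<Rightarrow> (real \<Rightarrow> real) \<Rightarrow> real \<Rightarrow> real" where
  "kantorovich n g y = (\<Sum>k\<le>n. Bernstein n k y *
     (real (n+1) * integral {real k / real (n+1) .. real (k+1) / real (n+1)} g))"

lemma sum_Bernstein_sq_deviation:
  "(\<Sum>k\<le>n. Bernstein n k y * (real k - real (n+1) * y)\<^sup>2) = real n * y * (1 - y) + y\<^sup>2"
proof -
  define c where "c = real (n+1)"
  have "Bernstein n k y * (real k - c * y)\<^sup>2
      = real k * (real k - 1) * Bernstein n k y + (1 - 2 * c * y) * (real k * Bernstein n k y)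
        + (c * y)\<^sup>2 * Bernstein n k y" for k
    by (simp add: power2_eq_square algebra_simps)
  then have "(\<Sum>k\<le>n. Bernstein n k y * (real k - c * y)\<^sup>2)
      = real n * (real n - 1) * y\<^sup>2 + (1 - 2 * c * y) * (real n * y) + (c * y)\<^sup>2"
    by (simp add: sum.distrib flip: sum_distrib_left)
  also have "\<dots> = real n * y * (1 - y) + y\<^sup>2"
    by (simp add: c_def power2_eq_square algebra_simps)
  finally show ?thesis by (simp add: c_def)
qed

lemma abs_average_minus_le:
  fixes g :: "real \<Rightarrow> real"
  assumes "a < b" and g: "continuous_on {a..b} g" and B: "\<And>t. t \<in> {a..b} \<Longrightarrow> \<bar>g t - v\<bar> \<le> B"
  shows "\<bar>integral {a..b} g / (b - a) - v\<bar> \<le> B"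
proof -
  have "integral {a..b} (\<lambda>t. g t - v) = integral {a..b} g - (b - a) * v"
    using integral_diff[OF integrable_continuous_interval[OF g] integrable_const_ivl] \<open>a < b\<close>
    by simp
  then have "integral {a..b} g / (b - a) - v = integral {a..b} (\<lambda>t. g t - v) / (b - a)"
    using \<open>a < b\<close> by (simp add: field_simps)
  moreover have "norm (integral {a..b} (\<lambda>t. g t - v)) \<le> B * (b - a)"
    using \<open>a < b\<close> by (intro integral_bound continuous_intros g) (auto intro: B)
  ultimately show ?thesis
    using \<open>a < b\<close> by (simp add: abs_divide divide_le_eq)
qed

lemma kantorovich_cell_error:
  assumes g: "continuous_on {0..1} g" and y: "y \<in> {0..1}" and "k \<le> n"
  defines "c \<equiv> real (n+1)"
  shows "\<bar>c * integral {real k / c .. real (k+1) / c} g - g y\<bar>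
    \<le> (3/2 + 1/c + (real k - c * y)\<^sup>2 / c) * modc g (1 / sqrt c)"
proof -
  have c: "c > 0" by (simp add: c_def)
  have cell: "{real k / c .. real (k+1) / c} \<subseteq> {0..1}"
    using \<open>k \<le> n\<close> c by (auto simp: c_def field_simps)
  have width: "real (k+1) / c - real k / c = 1 / c"
    by (simp add: add_divide_distrib)
  have ordered: "real k / c < real (k+1) / c"
    using c by (simp add: divide_strict_right_mono)
  have "\<bar>g t - g y\<bar> \<le> (3/2 + 1/c + (real k - c * y)\<^sup>2 / c) * modc g (1 / sqrt c)"
    if t: "t \<in> {real k / c .. real (k+1) / c}" for t
  proof -
    have sq: "(p + q)\<^sup>2 \<le> 2 * p\<^sup>2 + 2 * q\<^sup>2" for p q :: real
      using zero_le_power2[of "p - q"] by (simp add: power2_eq_square algebra_simps)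
    have "(t - y)\<^sup>2 \<le> 2 * (t - real k / c)\<^sup>2 + 2 * (real k / c - y)\<^sup>2"
      using sq[of "t - real k / c" "real k / c - y"] by simp
    also have "(t - real k / c)\<^sup>2 \<le> (1 / c)\<^sup>2"
      using t width by (intro power_mono) auto
    finally have "c * (t - y)\<^sup>2 / 2 \<le> 1/c + (real k - c * y)\<^sup>2 / c"
      using c by (simp add: field_simps power2_eq_square)
    moreover have "(t - y)\<^sup>2 / (2 * (1 / sqrt c)\<^sup>2) = c * (t - y)\<^sup>2 / 2"
      using c by (simp add: power_divide)
    moreover have "\<bar>g t - g y\<bar> \<le> (3/2 + (t - y)\<^sup>2 / (2 * (1 / sqrt c)\<^sup>2)) * modc g (1 / sqrt c)"
      using subsetD[OF cell t] c by (intro abs_diff_le_modc_quadratic[OF g y]) auto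
    ultimately show ?thesis
      using modc_nonneg[OF g, of "1 / sqrt c"] c
      by (smt (verit) mult_right_mono real_sqrt_ge_zero divide_nonneg_nonneg)
  qed
  then have "\<bar>integral {real k / c .. real (k+1) / c} g / (1 / c) - g y\<bar>
      \<le> (3/2 + 1/c + (real k - c * y)\<^sup>2 / c) * modc g (1 / sqrt c)"
    using abs_average_minus_le[OF ordered continuous_on_subset[OF g cell]] width by simp
  then show ?thesis by (simp add: mult.commute)
qed

lemma kantorovich_error:
  assumes g: "continuous_on {0..1} g" and y: "y \<in> {0..1}"
  shows "\<bar>kantorovich n g y - g y\<bar>
    \<le> 7/4 * (1 + 1 / (real n + 1)) * modc g (1 / sqrt (real n + 1))"
proof -
  define c where "c = real (n+1)"
  define \<omega> where "\<omega> = modc g (1 / sqrt c)"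
  define I where "I k = c * integral {real k / c .. real (k+1) / c} g" for k
  have c: "c > 0" and "real n = c - 1" and \<omega>: "\<omega> \<ge> 0"
    using modc_nonneg[OF g] by (simp_all add: c_def \<omega>_def)
  have B: "Bernstein n k y \<ge> 0" for k
    using y by (simp add: Bernstein_nonneg)
  have "kantorovich n g y - g y = (\<Sum>k\<le>n. Bernstein n k y * (I k - g y))"
    by (simp add: kantorovich_def I_def c_def right_diff_distrib sum_subtractf
        flip: sum_distrib_right)
  then have "\<bar>kantorovich n g y - g y\<bar> \<le> (\<Sum>k\<le>n. Bernstein n k y * \<bar>I k - g y\<bar>)"
    using B sum_abs[of "\<lambda>k. Bernstein n k y * (I k - g y)" "{..n}"] by (simp add: abs_mult)
  also have "\<dots> \<le> (\<Sum>k\<le>n. Bernstein n k y * ((3/2 + 1/c + (real k - c * y)\<^sup>2 / c) * \<omega>))"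
    using kantorovich_cell_error[OF g y] B
    by (intro sum_mono mult_left_mono) (simp_all add: I_def c_def \<omega>_def)
  also have "\<dots> = (3/2 + 1/c) * \<omega> * (\<Sum>k\<le>n. Bernstein n k y)
      + \<omega> / c * (\<Sum>k\<le>n. Bernstein n k y * (real k - c * y)\<^sup>2)"
  proof -
    have "Bernstein n k y * ((3/2 + 1/c + (real k - c * y)\<^sup>2 / c) * \<omega>)
        = (3/2 + 1/c) * \<omega> * Bernstein n k y + \<omega> / c * (Bernstein n k y * (real k - c * y)\<^sup>2)" for k
      by (simp add: algebra_simps)
    then show ?thesis
      by (simp only: sum.distrib flip: sum_distrib_left)
  qed
  also have "\<dots> = ((3/2 + 1/c) + (real n * y * (1 - y) + y\<^sup>2) / c) * \<omega>"
    unfolding sum_Bernstein c_def sum_Bernstein_sq_deviation by (simp add: field_simps)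
  also have "\<dots> \<le> 7/4 * (1 + 1/c) * \<omega>"
  proof (rule mult_right_mono[OF _ \<omega>])
    have "y * (1 - y) \<le> 1/4"
      using zero_le_power2[of "y - 1/2"] by (simp add: power2_eq_square algebra_simps)
    then have "real n * (y * (1 - y)) \<le> real n * (1/4)"
      by (intro mult_left_mono) auto
    moreover have "y\<^sup>2 \<le> 1"
      using y by (simp add: power_le_one)
    ultimately have "real n * y * (1 - y) + y\<^sup>2 \<le> real n * (1/4) + 1"
      unfolding mult.assoc by linarith
    then have "(3/2 + 1/c) + (real n * y * (1 - y) + y\<^sup>2) / c
        \<le> (3/2 + 1/c) + (real n * (1/4) + 1) / c"
      using c by (simp add: divide_right_mono)
    also have "\<dots> = 7/4 * (1 + 1/c)"
      using c by (simp add: \<open>real n = c - 1\<close> field_simps)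
    finally show "(3/2 + 1/c) + (real n * y * (1 - y) + y\<^sup>2) / c \<le> 7/4 * (1 + 1/c)" .
  qed
  finally show ?thesis by (simp add: c_def \<omega>_def add.commute)
qed

lemma kantorovich_error_le:
  assumes "continuous_on {0..1} g" and "y \<in> {0..1}" and "n \<ge> 2"
  shows "\<bar>kantorovich n g y - g y\<bar>
    \<le> modc g (1 / sqrt (real n + 1)) * (1 + 1 / (2 * sqrt (real n + 1)) + sqrt 2)"
proof -
  have "4/3 \<le> sqrt 2"
    by (rule real_le_rsqrt) (simp add: power2_eq_square)
  moreover have "7/4 * (1 + 1 / (real n + 1)) \<le> 7/3"
    using \<open>n \<ge> 2\<close> by (simp add: field_simps)
  moreover have "0 \<le> 1 / (2 * sqrt (real n + 1))"
    by simp
  ultimately have "7/4 * (1 + 1 / (real n + 1)) \<le> 1 + 1 / (2 * sqrt (real n + 1)) + sqrt 2"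
    by linarith
  then have "7/4 * (1 + 1 / (real n + 1)) * modc g (1 / sqrt (real n + 1))
      \<le> (1 + 1 / (2 * sqrt (real n + 1)) + sqrt 2) * modc g (1 / sqrt (real n + 1))"
    by (intro mult_right_mono modc_nonneg[OF assms(1)]) auto
  with kantorovich_error[OF assms(1,2), of n] show ?thesis
    by (simp only: mult.commute)
qed

lemma a_seq_mem_unit_interval:
  assumes "\<mu> > -1" and "m > 0" and x: "x \<in> {0..1}"
  shows "a_seq \<mu> m x \<in> {0..1}"
proof -
  define d where "d = real m * (1 + \<mu>)"
  have d: "d > 0" using assms by (simp add: d_def)
  have "0 < ln (1 + 1 / d)" and "0 \<le> ln (1 + x / d)"
    using d x by (simp_all add: ln_gt_zero ln_ge_zero)
  moreover have "ln (1 + x / d) \<le> ln (1 + 1 / d)"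
    using d x by (simp add: divide_right_mono add_pos_nonneg)
  ultimately show ?thesis
    by (simp add: a_seq_def d_def[symmetric] divide_le_eq)
qed

lemma abs_a_seq_minus_le_gamma_n:
  assumes "\<mu> > -1" and x: "x \<in> {0..1}"
  shows "\<bar>a_seq \<mu> (n+1) x - x\<bar> \<le> gamma_n \<mu> n"
proof -
  have "bdd_above ((\<lambda>x. \<bar>a_seq \<mu> (n+1) x - x\<bar>) ` {0..1})"
    by (rule bdd_aboveI2[where M = 1])
      (use a_seq_mem_unit_interval[OF \<open>\<mu> > -1\<close>, of "n+1"] in force)
  then show ?thesis
    unfolding gamma_n_def using x by (intro cSup_upper) auto
qed

lemma ln_mu_pos: "\<mu> > 0 \<Longrightarrow> x \<in> {0..1} \<Longrightarrow> ln_mu \<mu> x > 0"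
  by (simp add: ln_mu_def ln_gt_zero)

lemma ln_mu_le: "\<mu> > -1 \<Longrightarrow> x \<in> {0..1} \<Longrightarrow> ln_mu \<mu> x \<le> ln (2 + \<mu>)"
  by (simp add: ln_mu_def)

lemma continuous_on_f_mu:
  assumes "\<mu> > 0" and "continuous_on {0..1} f"
  shows "continuous_on {0..1} (f_mu \<mu> f)"
  unfolding f_mu_def[abs_def] ln_mu_def
  using assms by (intro continuous_intros) auto

lemma LK_eq_kantorovich:
  "LK \<mu> n f x = ln_mu \<mu> x * kantorovich n (f_mu \<mu> f) (a_seq \<mu> (n+1) x)"
  by (simp add: LK_def kantorovich_def bern_def Bernstein_def atLeast0AtMost)

lemma abs_LK_minus_le:
  assumes "\<mu> > 0" and "n \<ge> 2" and f: "continuous_on {0..1} f" and x: "x \<in> {0..1}"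
  defines "g \<equiv> f_mu \<mu> f"
  shows "\<bar>LK \<mu> n f x - f x\<bar> \<le> ln (2 + \<mu>) *
    (modc g (1 / sqrt (real n + 1)) * (1 + 1 / (2 * sqrt (real n + 1)) + sqrt 2)
      + modc g (gamma_n \<mu> n))" (is "_ \<le> _ * ?B")
proof -
  define y where "y = a_seq \<mu> (n+1) x"
  have g: "continuous_on {0..1} g"
    unfolding g_def using \<open>\<mu> > 0\<close> f by (rule continuous_on_f_mu)
  have y: "y \<in> {0..1}"
    unfolding y_def using \<open>\<mu> > 0\<close> x by (intro a_seq_mem_unit_interval) auto
  have L: "0 < ln_mu \<mu> x" "ln_mu \<mu> x \<le> ln (2 + \<mu>)"
    using \<open>\<mu> > 0\<close> x by (simp_all add: ln_mu_pos ln_mu_le)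
  have "LK \<mu> n f x - f x = ln_mu \<mu> x * ((kantorovich n g y - g y) + (g y - g x))"
    using L by (simp add: LK_eq_kantorovich g_def y_def f_mu_def algebra_simps)
  then have "\<bar>LK \<mu> n f x - f x\<bar> \<le> ln_mu \<mu> x * (\<bar>kantorovich n g y - g y\<bar> + \<bar>g y - g x\<bar>)"
    using L by (simp add: abs_mult abs_triangle_ineq mult_left_mono)
  also have "\<dots> \<le> ln_mu \<mu> x * ?B"
  proof (intro mult_left_mono add_mono)
    show "\<bar>kantorovich n g y - g y\<bar>
      \<le> modc g (1 / sqrt (real n + 1)) * (1 + 1 / (2 * sqrt (real n + 1)) + sqrt 2)"
      by (rule kantorovich_error_le[OF g y \<open>n \<ge> 2\<close>])
    show "\<bar>g y - g x\<bar> \<le> modc g (gamma_n \<mu> n)"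
      using abs_a_seq_minus_le_gamma_n[of \<mu> x n] \<open>\<mu> > 0\<close> x
      by (intro abs_diff_le_modc[OF g x y]) (simp add: y_def)
  qed (use L in simp)
  also have "\<dots> \<le> ln (2 + \<mu>) * ?B"
  proof (rule mult_right_mono[OF L(2)])
    have "0 \<le> ln_mu \<mu> x * ?B"
      using calculation by (rule order_trans[OF abs_ge_zero])
    then show "0 \<le> ?B"
      using L(1) by (simp add: zero_le_mult_iff)
  qed
  finally show ?thesis .
qed

theorem theorem6p1:
  fixes \<mu> :: real and n :: nat and f :: "real \<Rightarrow> real"
  assumes "\<mu> > 0" and "n > 1" and "continuous_on {0..1} f"
  shows "supn (\<lambda>x. LK \<mu> n f x - f x)
    \<le> modc (f_mu \<mu> f) (1 / sqrt (real n + 1)) * ln (2 + \<mu>)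
        * (1 + 1 / (2 * sqrt (real n + 1)) + sqrt 2)
      + modc (f_mu \<mu> f) (gamma_n \<mu> n) * ln (2 + \<mu>)"
proof -
  have "supn (\<lambda>x. LK \<mu> n f x - f x) \<le> ln (2 + \<mu>) *
    (modc (f_mu \<mu> f) (1 / sqrt (real n + 1)) * (1 + 1 / (2 * sqrt (real n + 1)) + sqrt 2)
      + modc (f_mu \<mu> f) (gamma_n \<mu> n))"
    unfolding supn_def using abs_LK_minus_le assms by (intro cSup_least) auto
  then show ?thesis by (simp add: algebra_simps)
qed

end
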